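(* Let $A$ be a finite set with $N\ge 2$ elements and let $(v_{xy})$ be a Llull matrix on $A$ with CLC structure that is not identically zero. Let $\rho_x=\frac{1}{N-1}\sum_{y\neq x}v_{xy}$ be its mean preference scores and $(\varphi_x)_{x\in A}$ its strengths. Then for all $x,y\in A$: (a) if $\varphi_x>\varphi_y$ then $\rho_x>\rho_y$; (b) if $\rho_x>\rho_y$ then either $\varphi_x>\varphi_y$ or $\varphi_x=\varphi_y=0$.
   Context: A Llull matrix on a finite set $A$ is an assignment to each ordered pair of distinct elements $x\neq y$ of $A$ of a number $v_{xy}\in[0,1]$ such that $v_{xy}+v_{yx}\le 1$. Turnouts: $t_{xy}=v_{xy}+v_{yx}$; margins: $m_{xy}=v_{xy}-v_{yx}$. The matrix has CLC structure if there is a total order $\xi$ on $A$ such that, writing $x<_\xi y$ when $x$ precedes $y$ and $x'$ for the immediate successor of $x$ in $\xi$ (when it exists): (i) $v_{xy}\ge v_{yx}$ whenever $x<_\xi y$; (ii) $v_{xz}=\max(v_{xy},v_{yz})$ whenever $x<_\xi y<_\xi z$; (iii) $v_{zx}=\min(v_{zy},v_{yx})$ whenever $x<_\xi y<_\xi z$; (iv) $0\le t_{xz}-t_{x'z}\le m_{xx'}$ whenever $x'$ exists and $z\notin\{x,x'\}$. Strengths (Zermelo's method): let $\Phi=\{\varphi\in\mathbb{R}^A:\varphi_x>0\ \forall x,\ \sum_x\varphi_x=1\}$ and $F(\varphi)=\prod_{\{x,y\}}\frac{\varphi_x^{v_{xy}}\varphi_y^{v_{yx}}}{(\varphi_x+\varphi_y)^{t_{xy}}}$,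 the product over unordered pairs of distinct elements of $A$. A maximizing sequence is a sequence $\varphi^n\in\Phi$ with $F(\varphi^n)\to\sup_\Phi F$. When the matrix has a top dominant irreducible component (which is the case for non-vanishing Llull matrices with CLC structure), there is a unique $\varphi$ in the closure $\overline{\Phi}$ such that every maximizing sequence converges to $\varphi$; this $\varphi$ is the vector of strengths. (Here irreducible components are the classes of $x\sim y$ iff $x=y$ or both indirect scores $\hat v_{xy},\hat v_{yx}$ are positive, where $\hat v_{xy}$ is the maximum over paths $x=x_0,\dots,x_n=y$ of $\min_i v_{x_ix_{i+1}}$; $x$ dominates $y$ iff $\hat v_{xy}>0=\hat v_{yx}$; a top dominant component dominates all other components.) *)

theory Defs
  imports Complex_Main
begin

definition llull_matrix :: "'a set \<Rightarrow> ('a \<Rightarrow> 'a \<Rightarrow> real) \<Rightarrow> bool" where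
  "llull_matrix A v \<longleftrightarrow> finite A \<and>
     (\<forall>x\<in>A. \<forall>y\<in>A. x \<noteq> y \<longrightarrow> 0 \<le> v x y \<and> v x y \<le> 1 \<and> v x y + v y x \<le> 1)"

definition turnout :: "('a \<Rightarrow> 'a \<Rightarrow> real) \<Rightarrow> 'a \<Rightarrow> 'a \<Rightarrow> real" where
  "turnout v x y = v x y + v y x"

definition margin :: "('a \<Rightarrow> 'a \<Rightarrow> real) \<Rightarrow> 'a \<Rightarrow> 'a \<Rightarrow> real" where
  "margin v x y = v x y - v y x"

(* A total order xi on A is encoded by its ranking r : A -> {0..<card A} (bijective);
   x <_xi y iff r x < r y, and x' (immediate successor of x) is the element of rank r x + 1. *)
definition clc_order :: "'a set \<Rightarrow> ('a \<Rightarrow> 'a \<Rightarrow> real) \<Rightarrow> ('a \<Rightarrow> nat) \<Rightarrow> bool" where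
  "clc_order A v r \<longleftrightarrow> bij_betw r A {0..<card A} \<and>
     (\<forall>x\<in>A. \<forall>y\<in>A. r x < r y \<longrightarrow> v x y \<ge> v y x) \<and>
     (\<forall>x\<in>A. \<forall>y\<in>A. \<forall>z\<in>A. r x < r y \<and> r y < r z \<longrightarrow> v x z = max (v x y) (v y z)) \<and>
     (\<forall>x\<in>A. \<forall>y\<in>A. \<forall>z\<in>A. r x < r y \<and> r y < r z \<longrightarrow> v z x = min (v z y) (v y x)) \<and>
     (\<forall>x\<in>A. \<forall>x'\<in>A. r x' = r x + 1 \<longrightarrow>
        (\<forall>z\<in>A. z \<noteq> x \<and> z \<noteq> x' \<longrightarrow>
           0 \<le> turnout v x z - turnout v x' z \<and> turnout v x z - turnout v x' z \<le> margin v x x'))"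

definition has_CLC :: "'a set \<Rightarrow> ('a \<Rightarrow> 'a \<Rightarrow> real) \<Rightarrow> bool" where
  "has_CLC A v \<longleftrightarrow> (\<exists>r. clc_order A v r)"

definition mean_score :: "'a set \<Rightarrow> ('a \<Rightarrow> 'a \<Rightarrow> real) \<Rightarrow> 'a \<Rightarrow> real" where
  "mean_score A v x = (\<Sum>y\<in>A - {x}. v x y) / (real (card A) - 1)"

definition Phi :: "'a set \<Rightarrow> ('a \<Rightarrow> real) set" where
  "Phi A = {\<phi>. (\<forall>x\<in>A. \<phi> x > 0) \<and> (\<Sum>x\<in>A. \<phi> x) = 1}"

(* F(phi): the product over unordered pairs {x,y} of
   phi_x^v_xy phi_y^v_yx / (phi_x+phi_y)^t_xy, written equivalently as the product over
   ordered pairs (x,y), x ~= y, of (phi_x/(phi_x+phi_y))^v_xy. *)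
definition zermelo_F :: "'a set \<Rightarrow> ('a \<Rightarrow> 'a \<Rightarrow> real) \<Rightarrow> ('a \<Rightarrow> real) \<Rightarrow> real" where
  "zermelo_F A v \<phi> = (\<Prod>(x,y)\<in>{(x,y). x \<in> A \<and> y \<in> A \<and> x \<noteq> y}.
                           (\<phi> x / (\<phi> x + \<phi> y)) powr (v x y))"

definition maximizing_seq :: "'a set \<Rightarrow> ('a \<Rightarrow> 'a \<Rightarrow> real) \<Rightarrow> (nat \<Rightarrow> 'a \<Rightarrow> real) \<Rightarrow> bool" where
  "maximizing_seq A v s \<longleftrightarrow> (\<forall>n. s n \<in> Phi A) \<and>
     (\<lambda>n. zermelo_F A v (s n)) \<longlonglongrightarrow> Sup (zermelo_F A v ` Phi A)"

definition strengths :: "'a set \<Rightarrow> ('a \<Rightarrow> 'a \<Rightarrow> real) \<Rightarrow> ('a \<Rightarrow> real) \<Rightarrow> bool" where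
  "strengths A v \<phi> \<longleftrightarrow> (\<forall>x\<in>A. \<phi> x \<ge> 0) \<and> (\<Sum>x\<in>A. \<phi> x) = 1 \<and>
     (\<forall>s. maximizing_seq A v s \<longrightarrow> (\<forall>x\<in>A. (\<lambda>n. s n x) \<longlonglongrightarrow> \<phi> x))"

end

theory Submission
  imports Defs "HOL-Analysis.Analysis"
begin

text \<open>
  Work with the log-likelihood \<open>L = ln F\<close>. For consecutive elements \<open>a, b\<close> of the CLC order,
  moving strength from \<open>b\<close> to \<open>a\<close> while keeping \<open>\<psi>\<^sub>a + \<psi>\<^sub>b\<close> fixed and not increasing
  \<open>\<psi>\<^sub>a \<psi>\<^sub>b\<close> raises \<open>L\<close> by at least \<open>K (ln \<psi>\<^sub>a' - ln \<psi>\<^sub>a) - (N - 1) (ln \<psi>\<^sub>a\<psi>\<^sub>b - ln \<psi>\<^sub>a'\<psi>\<^sub>b')\<close>,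
  where \<open>K = m\<^sub>a\<^sub>b + \<Sum>\<^sub>z (v\<^sub>z\<^sub>b - v\<^sub>z\<^sub>a) \<ge> 0\<close> by the CLC conditions. Hence swapping
  \<open>\<psi>\<^sub>a < \<psi>\<^sub>b\<close> never lowers \<open>F\<close>, so maximizing sequences may be sorted and \<open>\<phi>\<^sub>b \<le> \<phi>\<^sub>a\<close>;
  if \<open>K = 0\<close> and the turnouts of \<open>a\<close> and \<open>b\<close> agree, swapping is neutral and \<open>\<phi>\<^sub>a = \<phi>\<^sub>b\<close>;
  if \<open>K > 0\<close> and \<open>\<phi>\<^sub>a = \<phi>\<^sub>b > 0\<close>, shifting a small fixed amount from \<open>b\<close> to \<open>a\<close>
  eventually raises \<open>F\<close> along a maximizing sequence, which then could not converge to \<open>\<phi>\<close>.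
  Since \<open>(N - 1)(\<rho>\<^sub>a - \<rho>\<^sub>b) = m\<^sub>a\<^sub>b + \<Sum>\<^sub>z (v\<^sub>a\<^sub>z - v\<^sub>b\<^sub>z)\<close> and the CLC conditions make this
  vanish exactly when \<open>K\<close> and the turnout differences vanish, consecutive elements are ranked
  consistently by \<open>\<rho>\<close> and \<open>\<phi>\<close>, and consistency propagates along the order.
\<close>

lemma sum_remove_two:
  assumes "finite A" "a \<in> A" "b \<in> A" "a \<noteq> b"
  shows "sum f A = f a + f b + sum f (A - {a, b})"
proof -
  have "sum f A = f a + sum f (A - {a})" using assms by (simp add: sum.remove)
  also have "sum f (A - {a}) = f b + sum f (A - {a} - {b})" using assms by (intro sum.remove) auto
  also have "A - {a} - {b} = A - {a, b}" by auto
  finally show ?thesis by (simp add: add.assoc)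
qed

lemma real_card_Diff_two:
  assumes "finite A" "a \<in> A" "b \<in> A" "a \<noteq> b"
  shows "real (card (A - {a, b})) = real (card A) - 2"
proof -
  have "card {a, b} \<le> card A" using assms by (intro card_mono) auto
  moreover have "card (A - {a, b}) = card A - card {a, b}" using assms by (intro card_Diff_subset) auto
  ultimately show ?thesis using assms(4) by simp
qed

lemma sum_off_diagonal_two_rows:
  assumes fin: "finite A" and ab: "a \<in> A" "b \<in> A" "a \<noteq> b"
    and vanish: "\<And>x y. x \<notin> {a, b} \<Longrightarrow> y \<notin> {a, b} \<Longrightarrow> D x y = 0"
  shows "(\<Sum>(x, y)\<in>Sigma A (\<lambda>x. A - {x}). D x y) =
    D a b + D b a + (\<Sum>z\<in>A - {a, b}. D a z + D z a + D b z + D z b)"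
proof -
  have row: "(\<Sum>y\<in>A - {x}. D x y) = D x c + (\<Sum>z\<in>A - {a, b}. D x z)"
    if "{x, c} = {a, b}" "x \<noteq> c" for x c
  proof -
    have "(\<Sum>y\<in>A - {x}. D x y) = D x c + (\<Sum>z\<in>A - {x} - {c}. D x z)"
      using fin ab that by (intro sum.remove) (auto simp: doubleton_eq_iff)
    moreover have "A - {x} - {c} = A - {a, b}" using that by auto
    ultimately show ?thesis by simp
  qed
  have other_row: "(\<Sum>y\<in>A - {z}. D z y) = D z a + D z b" if "z \<in> A - {a, b}" for z
  proof -
    have "(\<Sum>y\<in>A - {z}. D z y) = D z a + D z b + (\<Sum>y\<in>A - {z} - {a, b}. D z y)"
      using that fin ab by (intro sum_remove_two) auto
    moreover have "(\<Sum>y\<in>A - {z} - {a, b}. D z y) = 0"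
      using that by (intro sum.neutral) (auto intro: vanish)
    ultimately show ?thesis by simp
  qed
  have "(\<Sum>(x, y)\<in>Sigma A (\<lambda>x. A - {x}). D x y) = (\<Sum>x\<in>A. \<Sum>y\<in>A - {x}. D x y)"
    using fin by (subst sum.Sigma) auto
  also have "\<dots> = (\<Sum>y\<in>A - {a}. D a y) + (\<Sum>y\<in>A - {b}. D b y)
      + (\<Sum>z\<in>A - {a, b}. \<Sum>y\<in>A - {z}. D z y)"
    by (rule sum_remove_two[OF fin ab])
  also have "\<dots> = (D a b + (\<Sum>z\<in>A - {a, b}. D a z)) + (D b a + (\<Sum>z\<in>A - {a, b}. D b z))
      + (\<Sum>z\<in>A - {a, b}. D z a + D z b)"
    using row[of a b] row[of b a] ab(3) sum.cong[OF refl other_row, of "A - {a, b}"]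
    by (simp add: insert_commute)
  finally show ?thesis by (simp add: sum.distrib algebra_simps)
qed

lemma ln_pair_exchange_ge:
  fixes p q p' q' v\<^sub>a\<^sub>b v\<^sub>b\<^sub>a :: real
  assumes pos: "p > 0" "q > 0" "p' > 0" "q' > 0"
    and sum_eq: "p' + q' = p + q" and prod_le: "p' * q' \<le> p * q"
    and v\<^sub>b\<^sub>a: "0 \<le> v\<^sub>b\<^sub>a" "v\<^sub>b\<^sub>a \<le> 1"
  shows "(v\<^sub>a\<^sub>b - v\<^sub>b\<^sub>a) * (ln p' - ln p) - (ln (p * q) - ln (p' * q'))
    \<le> v\<^sub>a\<^sub>b * (ln (p' / (p' + q')) - ln (p / (p + q))) + v\<^sub>b\<^sub>a * (ln (q' / (q' + p')) - ln (q / (q + p)))"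
proof -
  have "ln (p' * q') \<le> ln (p * q)" using prod_le pos by simp
  then have "0 \<le> (1 - v\<^sub>b\<^sub>a) * (ln (p * q) - ln (p' * q'))" using v\<^sub>b\<^sub>a by simp
  moreover have "ln (p' * q') = ln p' + ln q'" "ln (p * q) = ln p + ln q"
    and "ln (p' / (p' + q')) = ln p' - ln (p + q)" "ln (p / (p + q)) = ln p - ln (p + q)"
    and "ln (q' / (q' + p')) = ln q' - ln (p + q)" "ln (q / (q + p)) = ln q - ln (p + q)"
    using pos sum_eq by (auto simp: ln_mult ln_div add.commute)
  then have "v\<^sub>a\<^sub>b * (ln (p' / (p' + q')) - ln (p / (p + q))) + v\<^sub>b\<^sub>a * (ln (q' / (q' + p')) - ln (q / (q + p)))
      - ((v\<^sub>a\<^sub>b - v\<^sub>b\<^sub>a) * (ln p' - ln p) - (ln (p * q) - ln (p' * q')))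
    = (1 - v\<^sub>b\<^sub>a) * (ln (p * q) - ln (p' * q'))"
    by (simp only:) (simp add: algebra_simps)
  ultimately show ?thesis by linarith
qed

lemma ln_third_party_exchange_ge:
  fixes p q p' q' w v\<^sub>a\<^sub>z v\<^sub>z\<^sub>a v\<^sub>b\<^sub>z v\<^sub>z\<^sub>b :: real
  assumes pos: "p > 0" "q > 0" "p' > 0" "q' > 0" "w > 0"
    and sum_eq: "p' + q' = p + q" and prod_le: "p' * q' \<le> p * q"
    and v\<^sub>b\<^sub>z: "0 \<le> v\<^sub>b\<^sub>z" "v\<^sub>b\<^sub>z \<le> 1" and v\<^sub>z\<^sub>b: "0 \<le> v\<^sub>z\<^sub>b"
    and towards_p: "(p \<le> p' \<and> v\<^sub>b\<^sub>z + v\<^sub>z\<^sub>b \<le> v\<^sub>a\<^sub>z + v\<^sub>z\<^sub>a) \<or> v\<^sub>a\<^sub>z + v\<^sub>z\<^sub>a = v\<^sub>b\<^sub>z + v\<^sub>z\<^sub>b"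
  shows "(v\<^sub>z\<^sub>b - v\<^sub>z\<^sub>a) * (ln p' - ln p) - (ln (p * q) - ln (p' * q'))
    \<le> v\<^sub>a\<^sub>z * (ln (p' / (p' + w)) - ln (p / (p + w))) + v\<^sub>z\<^sub>a * (ln (w / (w + p')) - ln (w / (w + p)))
      + v\<^sub>b\<^sub>z * (ln (q' / (q' + w)) - ln (q / (q + w))) + v\<^sub>z\<^sub>b * (ln (w / (w + q')) - ln (w / (w + q)))"
proof -
  define e where "e = v\<^sub>a\<^sub>z + v\<^sub>z\<^sub>a - v\<^sub>b\<^sub>z - v\<^sub>z\<^sub>b"
  define X where "X = ln p' - ln p"
  define Y where "Y = ln (p' + w) - ln (p + w)"
  have "ln (p' * q') \<le> ln (p * q)" using prod_le pos by simp
  then have t1: "0 \<le> (1 - v\<^sub>b\<^sub>z) * (ln (p * q) - ln (p' * q'))" using v\<^sub>b\<^sub>z by simp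
  have "(p' + w) * (q' + w) = p' * q' + w * (p' + q') + w * w" by (simp add: algebra_simps)
  also have "\<dots> \<le> p * q + w * (p + q) + w * w" using prod_le sum_eq by simp
  also have "\<dots> = (p + w) * (q + w)" by (simp add: algebra_simps)
  finally have "(p' + w) * (q' + w) \<le> (p + w) * (q + w)" .
  then have "ln ((p' + w) * (q' + w)) \<le> ln ((p + w) * (q + w))" using pos by simp
  then have t2: "0 \<le> (v\<^sub>b\<^sub>z + v\<^sub>z\<^sub>b) * (ln ((p + w) * (q + w)) - ln ((p' + w) * (q' + w)))"
    using v\<^sub>b\<^sub>z v\<^sub>z\<^sub>b by simp
  have t3: "0 \<le> e * (X - Y)"
    using towards_p
  proof
    assume h: "p \<le> p' \<and> v\<^sub>b\<^sub>z + v\<^sub>z\<^sub>b \<le> v\<^sub>a\<^sub>z + v\<^sub>z\<^sub>a"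
    have "(p' + w) * p \<le> p' * (p + w)" using h pos by (simp add: algebra_simps)
    then have "ln ((p' + w) * p) \<le> ln (p' * (p + w))" using pos by simp
    then have "Y \<le> X" unfolding X_def Y_def using pos by (simp add: ln_mult)
    moreover have "0 \<le> e" using h unfolding e_def by simp
    ultimately show ?thesis by simp
  qed (simp add: e_def)
  have "ln (p' * q') = ln p' + ln q'" "ln (p * q) = ln p + ln q"
    and "ln ((p' + w) * (q' + w)) = ln (p' + w) + ln (q' + w)"
    and "ln ((p + w) * (q + w)) = ln (p + w) + ln (q + w)"
    and "ln (p' / (p' + w)) = ln p' - ln (p' + w)" "ln (p / (p + w)) = ln p - ln (p + w)"
    and "ln (w / (w + p')) = ln w - ln (p' + w)" "ln (w / (w + p)) = ln w - ln (p + w)"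
    and "ln (q' / (q' + w)) = ln q' - ln (q' + w)" "ln (q / (q + w)) = ln q - ln (q + w)"
    and "ln (w / (w + q')) = ln w - ln (q' + w)" "ln (w / (w + q)) = ln w - ln (q + w)"
    using pos by (auto simp: ln_mult ln_div add.commute)
  then have "v\<^sub>a\<^sub>z * (ln (p' / (p' + w)) - ln (p / (p + w))) + v\<^sub>z\<^sub>a * (ln (w / (w + p')) - ln (w / (w + p)))
      + v\<^sub>b\<^sub>z * (ln (q' / (q' + w)) - ln (q / (q + w))) + v\<^sub>z\<^sub>b * (ln (w / (w + q')) - ln (w / (w + q)))
      - ((v\<^sub>z\<^sub>b - v\<^sub>z\<^sub>a) * (ln p' - ln p) - (ln (p * q) - ln (p' * q')))
    = (1 - v\<^sub>b\<^sub>z) * (ln (p * q) - ln (p' * q'))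
      + (v\<^sub>b\<^sub>z + v\<^sub>z\<^sub>b) * (ln ((p + w) * (q + w)) - ln ((p' + w) * (q' + w))) + e * (X - Y)"
    unfolding e_def X_def Y_def by (simp only:) (simp add: algebra_simps)
  with t1 t2 t3 show ?thesis by linarith
qed

lemma ln_small_shift_le:
  fixes K n p q \<delta> :: real
  assumes K: "K > 0" and n: "n \<ge> 1" and q: "q > 0" and qp: "q \<le> p" and pq: "p - q \<le> \<delta>"
    and \<delta>: "\<delta> > 0" "\<delta> \<le> q / 2" "\<delta> \<le> K * q / (8 * n)"
  shows "n * (ln (p * q) - ln ((p + \<delta>) * (q - \<delta>))) \<le> K * (ln (p + \<delta>) - ln p)"
proof -
  have p: "p > 0" and p\<delta>: "p + \<delta> > 0" and q\<delta>: "q - \<delta> \<ge> q / 2" "q - \<delta> > 0"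
    using q qp \<delta> by auto
  have gain: "\<delta> / (p + \<delta>) \<le> ln (p + \<delta>) - ln p"
  proof -
    have "ln (p / (p + \<delta>)) \<le> p / (p + \<delta>) - 1" using p p\<delta> by (intro ln_le_minus_one) simp
    moreover have "ln (p / (p + \<delta>)) = ln p - ln (p + \<delta>)" using p p\<delta> by (simp add: ln_div)
    moreover have "p / (p + \<delta>) - 1 = - (\<delta> / (p + \<delta>))" using p\<delta> by (simp add: field_simps)
    ultimately show ?thesis by linarith
  qed
  have loss: "ln (p * q) - ln ((p + \<delta>) * (q - \<delta>)) \<le> 4 * \<delta>\<^sup>2 / ((p + \<delta>) * q)"
  proof -
    have pos: "(p + \<delta>) * (q - \<delta>) > 0" using p\<delta> q\<delta> by simp
    have "ln (p * q) - ln ((p + \<delta>) * (q - \<delta>)) = ln ((p * q) / ((p + \<delta>) * (q - \<delta>)))"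
      using p q pos by (subst ln_div) auto
    also have "\<dots> \<le> (p * q) / ((p + \<delta>) * (q - \<delta>)) - 1"
      using p q pos by (intro ln_le_minus_one) simp
    also have "\<dots> = (p * q - (p + \<delta>) * (q - \<delta>)) / ((p + \<delta>) * (q - \<delta>))"
      using p\<delta> q\<delta>(2) by (simp add: diff_divide_distrib)
    also have "\<dots> = (\<delta> * (p - q) + \<delta>\<^sup>2) / ((p + \<delta>) * (q - \<delta>))"
      by (simp add: algebra_simps power2_eq_square)
    also have "\<dots> \<le> (2 * \<delta>\<^sup>2) / ((p + \<delta>) * (q / 2))"
    proof (rule frac_le)
      show "\<delta> * (p - q) + \<delta>\<^sup>2 \<le> 2 * \<delta>\<^sup>2"
        using mult_left_mono[OF pq, of \<delta>] \<delta> by (simp add: power2_eq_square)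
      show "(p + \<delta>) * (q / 2) \<le> (p + \<delta>) * (q - \<delta>)"
        using p\<delta> q\<delta> by (intro mult_left_mono) auto
    qed (use p\<delta> q in auto)
    also have "\<dots> = 4 * \<delta>\<^sup>2 / ((p + \<delta>) * q)" using p\<delta> q by (simp add: field_simps)
    finally show ?thesis .
  qed
  have "8 * n * \<delta> \<le> K * q" using \<delta>(3) n by (simp add: field_simps)
  then have "4 * n * \<delta> \<le> K * q" using mult_nonneg_nonneg[of n \<delta>] n \<delta>(1) by linarith
  then have "4 * n * \<delta> / q \<le> K" using q by (simp add: field_simps)
  then have scale: "n * (4 * \<delta>\<^sup>2 / ((p + \<delta>) * q)) \<le> K * (\<delta> / (p + \<delta>))"
    using mult_left_mono[of "4 * n * \<delta> / q" K "\<delta> / (p + \<delta>)"] p\<delta> q \<delta>(1)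
    by (simp add: field_simps power2_eq_square)
  have "n * (ln (p * q) - ln ((p + \<delta>) * (q - \<delta>))) \<le> n * (4 * \<delta>\<^sup>2 / ((p + \<delta>) * q))"
    using loss n by (intro mult_left_mono) auto
  also have "\<dots> \<le> K * (\<delta> / (p + \<delta>))" by (rule scale)
  also have "\<dots> \<le> K * (ln (p + \<delta>) - ln p)" using gain K by (intro mult_left_mono) auto
  finally show ?thesis .
qed

definition log_zermelo :: "'a set \<Rightarrow> ('a \<Rightarrow> 'a \<Rightarrow> real) \<Rightarrow> ('a \<Rightarrow> real) \<Rightarrow> real" where
  "log_zermelo A v \<psi> = (\<Sum>(x, y)\<in>Sigma A (\<lambda>x. A - {x}). v x y * ln (\<psi> x / (\<psi> x + \<psi> y)))"

lemma zermelo_F_eq_exp_log_zermelo: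
  assumes "finite A" "\<forall>x\<in>A. \<psi> x > 0"
  shows "zermelo_F A v \<psi> = exp (log_zermelo A v \<psi>)"
proof -
  have pairs: "{(x, y). x \<in> A \<and> y \<in> A \<and> x \<noteq> y} = Sigma A (\<lambda>x. A - {x})" by auto
  have "(\<psi> x / (\<psi> x + \<psi> y)) powr v x y = exp (v x y * ln (\<psi> x / (\<psi> x + \<psi> y)))"
    if "x \<in> A" "y \<in> A" for x y
  proof -
    have "\<psi> x > 0" "\<psi> y > 0" using assms(2) that by auto
    then show ?thesis by (simp add: powr_def mult.commute)
  qed
  then have "zermelo_F A v \<psi> = (\<Prod>(x, y)\<in>Sigma A (\<lambda>x. A - {x}). exp (v x y * ln (\<psi> x / (\<psi> x + \<psi> y))))"
    unfolding zermelo_F_def pairs by (auto intro!: prod.cong)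
  also have "\<dots> = exp (log_zermelo A v \<psi>)"
    unfolding log_zermelo_def using assms(1) by (simp add: exp_sum case_prod_unfold)
  finally show ?thesis .
qed

lemma log_zermelo_nonpos:
  assumes "llull_matrix A v" "\<forall>x\<in>A. \<psi> x > 0"
  shows "log_zermelo A v \<psi> \<le> 0"
proof -
  have "v x y * ln (\<psi> x / (\<psi> x + \<psi> y)) \<le> 0" if "x \<in> A" "y \<in> A" "x \<noteq> y" for x y
  proof (rule mult_nonneg_nonpos)
    show "0 \<le> v x y" using assms(1) that unfolding llull_matrix_def by auto
    have "\<psi> x > 0" "\<psi> y > 0" using assms(2) that by auto
    then show "ln (\<psi> x / (\<psi> x + \<psi> y)) \<le> 0" by simp
  qed
  then show ?thesis unfolding log_zermelo_def by (auto intro!: sum_nonpos)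
qed

lemma zermelo_F_mono:
  assumes "finite A" "\<forall>x\<in>A. \<psi> x > 0" "\<forall>x\<in>A. \<psi>' x > 0"
    and "log_zermelo A v \<psi> \<le> log_zermelo A v \<psi>'"
  shows "zermelo_F A v \<psi> \<le> zermelo_F A v \<psi>'"
  using assms by (simp add: zermelo_F_eq_exp_log_zermelo)

lemma Phi_pos: "\<psi> \<in> Phi A \<Longrightarrow> x \<in> A \<Longrightarrow> \<psi> x > 0"
  unfolding Phi_def by auto

lemma uniform_in_Phi: "finite A \<Longrightarrow> A \<noteq> {} \<Longrightarrow> (\<lambda>_. 1 / real (card A)) \<in> Phi A"
  unfolding Phi_def by (simp add: card_gt_0_iff)

lemma Phi_update_two:
  assumes fin: "finite A" and \<psi>: "\<psi> \<in> Phi A" and ab: "a \<in> A" "b \<in> A" "a \<noteq> b"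
    and pos: "p > 0" "q > 0" and sum_eq: "p + q = \<psi> a + \<psi> b"
  shows "\<psi>(a := p, b := q) \<in> Phi A"
proof -
  have "(\<Sum>x\<in>A. (\<psi>(a := p, b := q)) x) = p + q + (\<Sum>x\<in>A - {a, b}. \<psi> x)"
    using sum_remove_two[OF fin ab, of "\<psi>(a := p, b := q)"] ab(3) by simp
  also have "\<dots> = (\<Sum>x\<in>A. \<psi> x)" using sum_remove_two[OF fin ab, of \<psi>] sum_eq by simp
  finally show ?thesis using \<psi> pos unfolding Phi_def by auto
qed

lemma zermelo_F_le_one: "llull_matrix A v \<Longrightarrow> \<psi> \<in> Phi A \<Longrightarrow> zermelo_F A v \<psi> \<le> 1"
  using zermelo_F_eq_exp_log_zermelo[of A \<psi> v] log_zermelo_nonpos[of A v \<psi>]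
  by (simp add: llull_matrix_def Phi_pos)

lemma zermelo_F_le_Sup:
  assumes "llull_matrix A v" "\<psi> \<in> Phi A"
  shows "zermelo_F A v \<psi> \<le> Sup (zermelo_F A v ` Phi A)"
  using assms zermelo_F_le_one[OF assms(1)] by (intro cSup_upper bdd_aboveI2) auto

lemma maximizing_seq_Phi: "maximizing_seq A v s \<Longrightarrow> s n \<in> Phi A"
  unfolding maximizing_seq_def by blast

lemma ex_maximizing_seq:
  assumes ll: "llull_matrix A v" and ne: "A \<noteq> {}"
  obtains s where "maximizing_seq A v s"
proof -
  let ?S = "zermelo_F A v ` Phi A"
  have "Sup ?S \<in> closure ?S"
    using uniform_in_Phi[OF _ ne] ll zermelo_F_le_one[OF ll]
    by (intro closure_contains_Sup bdd_aboveI2) (auto simp: llull_matrix_def)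
  then obtain f where f: "\<forall>n. f n \<in> ?S" "f \<longlonglongrightarrow> Sup ?S" unfolding closure_sequential by blast
  then have "\<forall>n. \<exists>\<psi>. \<psi> \<in> Phi A \<and> f n = zermelo_F A v \<psi>" by blast
  then obtain s where s: "\<forall>n. s n \<in> Phi A \<and> f n = zermelo_F A v (s n)" by metis
  then have "f = (\<lambda>n. zermelo_F A v (s n))" by auto
  with f(2) s show ?thesis using that unfolding maximizing_seq_def by auto
qed

lemma maximizing_seq_if_eventually_ge:
  assumes ll: "llull_matrix A v" and s: "maximizing_seq A v s" and t: "\<And>n. t n \<in> Phi A"
    and ge: "\<forall>\<^sub>F n in sequentially. zermelo_F A v (s n) \<le> zermelo_F A v (t n)"
  shows "maximizing_seq A v t"
proof -
  have "(\<lambda>n. zermelo_F A v (t n)) \<longlonglongrightarrow> Sup (zermelo_F A v ` Phi A)"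
  proof (rule tendsto_sandwich[OF ge _ _ tendsto_const])
    show "\<forall>\<^sub>F n in sequentially. zermelo_F A v (t n) \<le> Sup (zermelo_F A v ` Phi A)"
      by (intro always_eventually allI zermelo_F_le_Sup[OF ll t])
    show "(\<lambda>n. zermelo_F A v (s n)) \<longlonglongrightarrow> Sup (zermelo_F A v ` Phi A)"
      using s unfolding maximizing_seq_def by blast
  qed
  with t show ?thesis unfolding maximizing_seq_def by blast
qed

lemma log_zermelo_diff_update_two:
  fixes v :: "'a \<Rightarrow> 'a \<Rightarrow> real" and \<psi> \<psi>' :: "'a \<Rightarrow> real"
  assumes fin: "finite A" and ab: "a \<in> A" "b \<in> A" "a \<noteq> b"
    and unchanged: "\<And>z. z \<notin> {a, b} \<Longrightarrow> \<psi>' z = \<psi> z"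
  defines "D \<equiv> \<lambda>x y. v x y * (ln (\<psi>' x / (\<psi>' x + \<psi>' y)) - ln (\<psi> x / (\<psi> x + \<psi> y)))"
  shows "log_zermelo A v \<psi>' - log_zermelo A v \<psi>
    = D a b + D b a + (\<Sum>z\<in>A - {a, b}. D a z + D z a + D b z + D z b)"
proof -
  have "log_zermelo A v \<psi>' - log_zermelo A v \<psi> = (\<Sum>(x, y)\<in>Sigma A (\<lambda>x. A - {x}). D x y)"
    unfolding log_zermelo_def D_def
    by (simp add: sum_subtractf[symmetric] right_diff_distrib case_prod_unfold)
  also have "\<dots> = D a b + D b a + (\<Sum>z\<in>A - {a, b}. D a z + D z a + D b z + D z b)"
    by (rule sum_off_diagonal_two_rows[OF fin ab]) (simp add: D_def unchanged)
  finally show ?thesis .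
qed

definition exchange_coeff :: "'a set \<Rightarrow> ('a \<Rightarrow> 'a \<Rightarrow> real) \<Rightarrow> 'a \<Rightarrow> 'a \<Rightarrow> real" where
  "exchange_coeff A v a b = margin v a b + (\<Sum>z\<in>A - {a, b}. v z b - v z a)"

lemma log_zermelo_exchange_ge:
  assumes ll: "llull_matrix A v" and ab: "a \<in> A" "b \<in> A" "a \<noteq> b"
    and pos: "\<forall>x\<in>A. \<psi> x > 0" and pq: "p > 0" "q > 0"
    and sum_eq: "p + q = \<psi> a + \<psi> b" and prod_le: "p * q \<le> \<psi> a * \<psi> b"
    and turnout_le: "\<forall>z\<in>A - {a, b}. turnout v b z \<le> turnout v a z"
    and towards_a: "\<psi> a \<le> p \<or> (\<forall>z\<in>A - {a, b}. turnout v a z = turnout v b z)"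
  shows "exchange_coeff A v a b * (ln p - ln (\<psi> a))
      - (real (card A) - 1) * (ln (\<psi> a * \<psi> b) - ln (p * q))
    \<le> log_zermelo A v (\<psi>(a := p, b := q)) - log_zermelo A v \<psi>"
proof -
  define \<psi>' where "\<psi>' = \<psi>(a := p, b := q)"
  define D where "D x y = v x y * (ln (\<psi>' x / (\<psi>' x + \<psi>' y)) - ln (\<psi> x / (\<psi> x + \<psi> y)))" for x y
  define X where "X = ln p - ln (\<psi> a)"
  define \<alpha> where "\<alpha> = ln (\<psi> a * \<psi> b) - ln (p * q)"
  have fin: "finite A" using ll by (simp add: llull_matrix_def)
  have v: "0 \<le> v x y" "v x y \<le> 1" if "x \<in> A" "y \<in> A" "x \<noteq> y" for x y
    using ll that unfolding llull_matrix_def by auto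
  have \<psi>': "\<psi>' a = p" "\<psi>' b = q" "\<And>z. z \<notin> {a, b} \<Longrightarrow> \<psi>' z = \<psi> z"
    using ab(3) by (auto simp: \<psi>'_def)
  have split: "log_zermelo A v \<psi>' - log_zermelo A v \<psi>
    = D a b + D b a + (\<Sum>z\<in>A - {a, b}. D a z + D z a + D b z + D z b)"
    unfolding D_def using \<psi>'(3) by (intro log_zermelo_diff_update_two[OF fin ab]) auto
  have pair: "margin v a b * X - \<alpha> \<le> D a b + D b a"
    using ln_pair_exchange_ge[OF pos[rule_format, OF ab(1)] pos[rule_format, OF ab(2)] pq
        _ prod_le v[OF ab(2,1)], of "v a b"] sum_eq ab(3)
    unfolding D_def \<psi>' X_def \<alpha>_def margin_def by simp
  have third: "(v z b - v z a) * X - \<alpha> \<le> D a z + D z a + D b z + D z b" if z: "z \<in> A - {a, b}" for z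
  proof -
    have "\<psi>' z = \<psi> z" using z by (simp add: \<psi>'_def)
    moreover have "(\<psi> a \<le> p \<and> v b z + v z b \<le> v a z + v z a) \<or> v a z + v z a = v b z + v z b"
      using towards_a turnout_le z unfolding turnout_def by auto
    ultimately show ?thesis
      using ln_third_party_exchange_ge[OF pos[rule_format, OF ab(1)] pos[rule_format, OF ab(2)] pq
          pos[rule_format, of z] _ prod_le v[of b z] _] z v[of z b] sum_eq ab(2)
      unfolding D_def \<psi>'(1,2) X_def \<alpha>_def by auto
  qed
  have "(\<Sum>z\<in>A - {a, b}. v z b - v z a) * X - (real (card A) - 2) * \<alpha>
      = (\<Sum>z\<in>A - {a, b}. (v z b - v z a) * X - \<alpha>)"
    using real_card_Diff_two[OF fin ab] by (simp add: sum_subtractf sum_distrib_right left_diff_distrib)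
  also have "\<dots> \<le> (\<Sum>z\<in>A - {a, b}. D a z + D z a + D b z + D z b)"
    by (rule sum_mono) (rule third)
  finally have thirds: "(\<Sum>z\<in>A - {a, b}. v z b - v z a) * X - (real (card A) - 2) * \<alpha>
      \<le> (\<Sum>z\<in>A - {a, b}. D a z + D z a + D b z + D z b)" .
  have "exchange_coeff A v a b * X - (real (card A) - 1) * \<alpha>
      = (margin v a b * X - \<alpha>) + ((\<Sum>z\<in>A - {a, b}. v z b - v z a) * X - (real (card A) - 2) * \<alpha>)"
    unfolding exchange_coeff_def by (simp add: algebra_simps)
  with split pair thirds show ?thesis unfolding \<psi>'_def X_def \<alpha>_def by linarith
qed

lemma mean_score_diff:
  assumes "finite A" "a \<in> A" "b \<in> A" "a \<noteq> b"
  shows "(real (card A) - 1) * (mean_score A v a - mean_score A v b)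
    = margin v a b + (\<Sum>z\<in>A - {a, b}. v a z - v b z)"
proof -
  have row: "(\<Sum>y\<in>A - {x}. v x y) = v x c + (\<Sum>z\<in>A - {x} - {c}. v x z)"
    if "x \<in> A" "c \<in> A" "x \<noteq> c" for x c
    using assms(1) that by (intro sum.remove) auto
  have "A - {a} - {b} = A - {a, b}" "A - {b} - {a} = A - {a, b}" by auto
  then have "(\<Sum>y\<in>A - {a}. v a y) = v a b + (\<Sum>z\<in>A - {a, b}. v a z)"
    and "(\<Sum>y\<in>A - {b}. v b y) = v b a + (\<Sum>z\<in>A - {a, b}. v b z)"
    using row[of a b] row[of b a] assms(2-4) by auto
  moreover have "real (card A) - 1 \<noteq> 0" using real_card_Diff_two[OF assms] by linarith
  ultimately show ?thesis unfolding mean_score_def margin_def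
    by (simp add: diff_divide_distrib[symmetric] sum_subtractf)
qed

locale clc =
  fixes A :: "'a set" and v :: "'a \<Rightarrow> 'a \<Rightarrow> real" and r :: "'a \<Rightarrow> nat"
  assumes llull: "llull_matrix A v" and order: "clc_order A v r"
begin

lemma finite_A: "finite A"
  using llull by (simp add: llull_matrix_def)

lemma rank_bij: "bij_betw r A {0..<card A}"
  using order unfolding clc_order_def by blast

lemma rank_inj: "x \<in> A \<Longrightarrow> y \<in> A \<Longrightarrow> r x = r y \<Longrightarrow> x = y"
  using rank_bij by (meson bij_betw_def inj_onD)

lemma ex_of_rank: "y \<in> A \<Longrightarrow> k < r y \<Longrightarrow> \<exists>x\<in>A. r x = k"
  using rank_bij unfolding bij_betw_def by (metis atLeastLessThan_iff image_eqI imageE le0 order.strict_trans)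

lemma consecutive_preference_le:
  assumes a: "a \<in> A" and b: "b \<in> A" and succ: "r b = r a + 1" and z: "z \<in> A - {a, b}"
  shows "v b z \<le> v a z" and "v z a \<le> v z b"
proof -
  have "r z \<noteq> r a" "r z \<noteq> r b" using rank_inj a b z by auto
  then have "r z < r a \<or> r b < r z" using succ by linarith
  then have "v b z \<le> v a z \<and> v z a \<le> v z b"
  proof
    assume "r z < r a"
    then have "v b z = min (v b a) (v a z)" "v z b = max (v z a) (v a b)"
      using order a b z succ unfolding clc_order_def by auto
    then show ?thesis by simp
  next
    assume "r b < r z"
    then have "v a z = max (v a b) (v b z)" "v z a = min (v z b) (v b a)"
      using order a b z succ unfolding clc_order_def by auto
    then show ?thesis by simp
  qed
  then show "v b z \<le> v a z" and "v z a \<le> v z b" by auto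
qed

lemma consecutive_margin_nonneg: "a \<in> A \<Longrightarrow> b \<in> A \<Longrightarrow> r b = r a + 1 \<Longrightarrow> 0 \<le> margin v a b"
  using order unfolding clc_order_def margin_def by auto

lemma consecutive_turnout_bounds:
  "a \<in> A \<Longrightarrow> b \<in> A \<Longrightarrow> r b = r a + 1 \<Longrightarrow> z \<in> A - {a, b} \<Longrightarrow>
    turnout v b z \<le> turnout v a z \<and> turnout v a z - turnout v b z \<le> margin v a b"
  using order unfolding clc_order_def by auto

lemma consecutive_exchange_coeff_nonneg:
  "a \<in> A \<Longrightarrow> b \<in> A \<Longrightarrow> r b = r a + 1 \<Longrightarrow> 0 \<le> exchange_coeff A v a b"
  unfolding exchange_coeff_def using consecutive_margin_nonneg consecutive_preference_le(2)
  by (intro add_nonneg_nonneg sum_nonneg) auto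

lemma consecutive_swap_ge:
  assumes a: "a \<in> A" and b: "b \<in> A" and succ: "r b = r a + 1" and \<psi>: "\<psi> \<in> Phi A"
    and swap_ok: "\<psi> a \<le> \<psi> b \<or>
      (exchange_coeff A v a b = 0 \<and> (\<forall>z\<in>A - {a, b}. turnout v a z = turnout v b z))"
  shows "zermelo_F A v \<psi> \<le> zermelo_F A v (\<psi>(a := \<psi> b, b := \<psi> a))"
proof (rule zermelo_F_mono[OF finite_A])
  have ab: "a \<noteq> b" using succ by auto
  have pos: "\<forall>x\<in>A. \<psi> x > 0" using \<psi> by (simp add: Phi_pos)
  then show "\<forall>x\<in>A. \<psi> x > 0" "\<forall>x\<in>A. (\<psi>(a := \<psi> b, b := \<psi> a)) x > 0"
    using a b by auto
  have "exchange_coeff A v a b * (ln (\<psi> b) - ln (\<psi> a))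
      - (real (card A) - 1) * (ln (\<psi> a * \<psi> b) - ln (\<psi> b * \<psi> a))
    \<le> log_zermelo A v (\<psi>(a := \<psi> b, b := \<psi> a)) - log_zermelo A v \<psi>"
    using swap_ok pos a b consecutive_turnout_bounds[OF a b succ]
    by (intro log_zermelo_exchange_ge[OF llull a b ab]) auto
  moreover have "0 \<le> exchange_coeff A v a b * (ln (\<psi> b) - ln (\<psi> a))"
    using swap_ok consecutive_exchange_coeff_nonneg[OF a b succ] pos a b by auto
  ultimately show "log_zermelo A v \<psi> \<le> log_zermelo A v (\<psi>(a := \<psi> b, b := \<psi> a))"
    by (simp add: mult.commute)
qed

lemma consecutive_shift_ge:
  assumes a: "a \<in> A" and b: "b \<in> A" and succ: "r b = r a + 1" and \<psi>: "\<psi> \<in> Phi A"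
    and K: "exchange_coeff A v a b > 0" and sorted: "\<psi> b \<le> \<psi> a" and close: "\<psi> a - \<psi> b \<le> \<delta>"
    and \<delta>: "\<delta> > 0" "\<delta> \<le> \<psi> b / 2" "\<delta> \<le> exchange_coeff A v a b * \<psi> b / (8 * (real (card A) - 1))"
  shows "zermelo_F A v \<psi> \<le> zermelo_F A v (\<psi>(a := \<psi> a + \<delta>, b := \<psi> b - \<delta>))"
proof (rule zermelo_F_mono[OF finite_A])
  have ab: "a \<noteq> b" using succ by auto
  have pos: "\<forall>x\<in>A. \<psi> x > 0" using \<psi> by (simp add: Phi_pos)
  then have pos_shift: "\<psi> a + \<delta> > 0" "\<psi> b - \<delta> > 0" using a b \<delta> by auto
  with pos show "\<forall>x\<in>A. \<psi> x > 0" "\<forall>x\<in>A. (\<psi>(a := \<psi> a + \<delta>, b := \<psi> b - \<delta>)) x > 0"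
    by auto
  have "(\<psi> a + \<delta>) * (\<psi> b - \<delta>) \<le> \<psi> a * \<psi> b"
    using sorted \<delta>(1) mult_left_mono[of "\<psi> b" "\<psi> a + \<delta>" \<delta>] by (simp add: algebra_simps)
  then have "exchange_coeff A v a b * (ln (\<psi> a + \<delta>) - ln (\<psi> a))
      - (real (card A) - 1) * (ln (\<psi> a * \<psi> b) - ln ((\<psi> a + \<delta>) * (\<psi> b - \<delta>)))
    \<le> log_zermelo A v (\<psi>(a := \<psi> a + \<delta>, b := \<psi> b - \<delta>)) - log_zermelo A v \<psi>"
    using pos pos_shift \<delta>(1) consecutive_turnout_bounds[OF a b succ]
    by (intro log_zermelo_exchange_ge[OF llull a b ab]) auto
  moreover have "(real (card A) - 1) * (ln (\<psi> a * \<psi> b) - ln ((\<psi> a + \<delta>) * (\<psi> b - \<delta>)))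
      \<le> exchange_coeff A v a b * (ln (\<psi> a + \<delta>) - ln (\<psi> a))"
    using real_card_Diff_two[OF finite_A a b ab] pos b sorted close \<delta>
    by (intro ln_small_shift_le K) auto
  ultimately show "log_zermelo A v \<psi> \<le> log_zermelo A v (\<psi>(a := \<psi> a + \<delta>, b := \<psi> b - \<delta>))"
    by linarith
qed

lemma consecutive_gap_nonneg:
  "a \<in> A \<Longrightarrow> b \<in> A \<Longrightarrow> r b = r a + 1 \<Longrightarrow> 0 \<le> (\<Sum>z\<in>A - {a, b}. v a z - v b z)"
  using consecutive_preference_le(1) by (intro sum_nonneg) auto

lemma consecutive_mean_score_le:
  assumes a: "a \<in> A" and b: "b \<in> A" and succ: "r b = r a + 1"
  shows "mean_score A v b \<le> mean_score A v a"
proof -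
  have ab: "a \<noteq> b" using succ by auto
  have "0 \<le> margin v a b + (\<Sum>z\<in>A - {a, b}. v a z - v b z)"
    using consecutive_margin_nonneg[OF a b succ] consecutive_gap_nonneg[OF a b succ] by linarith
  then have "0 \<le> (real (card A) - 1) * (mean_score A v a - mean_score A v b)"
    by (simp add: mean_score_diff[OF finite_A a b ab])
  moreover have "real (card A) - 1 > 0" using real_card_Diff_two[OF finite_A a b ab] by linarith
  ultimately show ?thesis by (simp add: zero_le_mult_iff)
qed

lemma consecutive_mean_score_eq_imp:
  assumes a: "a \<in> A" and b: "b \<in> A" and succ: "r b = r a + 1"
    and eq: "mean_score A v a = mean_score A v b"
  shows "exchange_coeff A v a b = 0" and "\<forall>z\<in>A - {a, b}. turnout v a z = turnout v b z"
proof -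
  have ab: "a \<noteq> b" using succ by auto
  have "margin v a b + (\<Sum>z\<in>A - {a, b}. v a z - v b z) = 0"
    using mean_score_diff[OF finite_A a b ab, of v] eq by simp
  then have margin0: "margin v a b = 0" and gap0: "(\<Sum>z\<in>A - {a, b}. v a z - v b z) = 0"
    using consecutive_margin_nonneg[OF a b succ] consecutive_gap_nonneg[OF a b succ] by linarith+
  have same_out: "\<forall>z\<in>A - {a, b}. v a z = v b z"
    using gap0 consecutive_preference_le(1)[OF a b succ] finite_A
    by (subst (asm) sum_nonneg_eq_0_iff) auto
  show turnouts: "\<forall>z\<in>A - {a, b}. turnout v a z = turnout v b z"
    using consecutive_turnout_bounds[OF a b succ] margin0 by force
  with same_out have "\<forall>z\<in>A - {a, b}. v z b - v z a = 0" unfolding turnout_def by auto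
  then show "exchange_coeff A v a b = 0" using margin0 unfolding exchange_coeff_def by simp
qed

lemma consecutive_exchange_coeff_pos:
  assumes a: "a \<in> A" and b: "b \<in> A" and succ: "r b = r a + 1"
    and less: "mean_score A v b < mean_score A v a"
  shows "0 < exchange_coeff A v a b"
proof (cases "margin v a b = 0")
  case True
  have ab: "a \<noteq> b" using succ by auto
  have "real (card A) - 1 > 0" using real_card_Diff_two[OF finite_A a b ab] by linarith
  then have "0 < (real (card A) - 1) * (mean_score A v a - mean_score A v b)" using less by simp
  also have "\<dots> = margin v a b + (\<Sum>z\<in>A - {a, b}. v a z - v b z)"
    by (rule mean_score_diff[OF finite_A a b ab])
  also have "\<dots> = exchange_coeff A v a b"
  proof -
    have "v a z - v b z = v z b - v z a" if "z \<in> A - {a, b}" for z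
      using consecutive_turnout_bounds[OF a b succ that] True unfolding turnout_def by linarith
    then show ?thesis unfolding exchange_coeff_def by simp
  qed
  finally show ?thesis .
next
  case False
  then have "0 < margin v a b" using consecutive_margin_nonneg[OF a b succ] by simp
  moreover have "0 \<le> (\<Sum>z\<in>A - {a, b}. v z b - v z a)"
    using consecutive_preference_le(2)[OF a b succ] by (intro sum_nonneg) auto
  ultimately show ?thesis unfolding exchange_coeff_def by linarith
qed

end

locale clc_strengths = clc +
  fixes \<phi> :: "'a \<Rightarrow> real"
  assumes strengths: "strengths A v \<phi>"
begin

lemma strength_nonneg: "x \<in> A \<Longrightarrow> 0 \<le> \<phi> x"
  using strengths unfolding strengths_def by blast

lemma maximizing_seq_tendsto: "maximizing_seq A v s \<Longrightarrow> x \<in> A \<Longrightarrow> (\<lambda>n. s n x) \<longlonglongrightarrow> \<phi> x"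
  using strengths unfolding strengths_def by blast

lemma ex_sorted_maximizing_seq:
  assumes a: "a \<in> A" and b: "b \<in> A" and succ: "r b = r a + 1"
  obtains t where "maximizing_seq A v t" "\<And>n. t n b \<le> t n a"
    and "(\<lambda>n. t n a) \<longlonglongrightarrow> max (\<phi> a) (\<phi> b)"
proof -
  have ab: "a \<noteq> b" using succ by auto
  obtain s where s: "maximizing_seq A v s" using ex_maximizing_seq[OF llull] a by blast
  define t where "t n = (if s n a < s n b then (s n)(a := s n b, b := s n a) else s n)" for n
  have "t n \<in> Phi A" for n
    unfolding t_def using Phi_update_two[OF finite_A maximizing_seq_Phi[OF s] a b ab]
      Phi_pos[OF maximizing_seq_Phi[OF s]] a b maximizing_seq_Phi[OF s] by simp
  moreover have "zermelo_F A v (s n) \<le> zermelo_F A v (t n)" for n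
    unfolding t_def using consecutive_swap_ge[OF a b succ maximizing_seq_Phi[OF s]] by simp
  ultimately have "maximizing_seq A v t"
    by (intro maximizing_seq_if_eventually_ge[OF llull s] always_eventually allI)
  moreover have "t n b \<le> t n a" for n unfolding t_def using ab by auto
  moreover have "(\<lambda>n. t n a) = (\<lambda>n. max (s n a) (s n b))" unfolding t_def using ab by auto
  then have "(\<lambda>n. t n a) \<longlonglongrightarrow> max (\<phi> a) (\<phi> b)"
    by (simp add: tendsto_max maximizing_seq_tendsto[OF s] a b)
  ultimately show ?thesis using that by blast
qed

lemma strength_consecutive_le:
  assumes a: "a \<in> A" and b: "b \<in> A" and succ: "r b = r a + 1"
  shows "\<phi> b \<le> \<phi> a"
proof -
  obtain t where t: "maximizing_seq A v t" "(\<lambda>n. t n a) \<longlonglongrightarrow> max (\<phi> a) (\<phi> b)"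
    using ex_sorted_maximizing_seq[OF a b succ] by blast
  have "\<phi> a = max (\<phi> a) (\<phi> b)" using maximizing_seq_tendsto[OF t(1) a] t(2) by (rule LIMSEQ_unique)
  then show ?thesis by simp
qed

lemma strength_consecutive_eq:
  assumes a: "a \<in> A" and b: "b \<in> A" and succ: "r b = r a + 1"
    and K: "exchange_coeff A v a b = 0" and turnouts: "\<forall>z\<in>A - {a, b}. turnout v a z = turnout v b z"
  shows "\<phi> a = \<phi> b"
proof -
  have ab: "a \<noteq> b" using succ by auto
  obtain s where s: "maximizing_seq A v s" using ex_maximizing_seq[OF llull] a by blast
  define t where "t n = (s n)(a := s n b, b := s n a)" for n
  have "t n \<in> Phi A" for n
    unfolding t_def using Phi_update_two[OF finite_A maximizing_seq_Phi[OF s] a b ab]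
      Phi_pos[OF maximizing_seq_Phi[OF s]] a b by simp
  moreover have "zermelo_F A v (s n) \<le> zermelo_F A v (t n)" for n
    unfolding t_def using consecutive_swap_ge[OF a b succ maximizing_seq_Phi[OF s]] K turnouts by simp
  ultimately have "maximizing_seq A v t"
    by (intro maximizing_seq_if_eventually_ge[OF llull s] always_eventually allI)
  moreover have "(\<lambda>n. t n a) = (\<lambda>n. s n b)" unfolding t_def using ab by auto
  ultimately have "(\<lambda>n. s n b) \<longlonglongrightarrow> \<phi> a" using maximizing_seq_tendsto[of t a] a by simp
  then show ?thesis using maximizing_seq_tendsto[OF s b] by (rule LIMSEQ_unique)
qed

lemma maximizing_seq_no_eventual_shift:
  assumes t: "maximizing_seq A v t" and ab: "a \<in> A" "b \<in> A" "a \<noteq> b" and \<delta>: "\<delta> \<noteq> 0"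
    and improves: "\<forall>\<^sub>F n in sequentially. (t n)(a := t n a + \<delta>, b := t n b - \<delta>) \<in> Phi A \<and>
      zermelo_F A v (t n) \<le> zermelo_F A v ((t n)(a := t n a + \<delta>, b := t n b - \<delta>))"
  shows False
proof -
  define P where "P n \<longleftrightarrow> (t n)(a := t n a + \<delta>, b := t n b - \<delta>) \<in> Phi A \<and>
      zermelo_F A v (t n) \<le> zermelo_F A v ((t n)(a := t n a + \<delta>, b := t n b - \<delta>))" for n
  define w where "w n = (if P n then (t n)(a := t n a + \<delta>, b := t n b - \<delta>) else t n)" for n
  have "w n \<in> Phi A" for n unfolding w_def P_def using maximizing_seq_Phi[OF t] by simp
  moreover have "\<forall>\<^sub>F n in sequentially. zermelo_F A v (t n) \<le> zermelo_F A v (w n)"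
    using improves by eventually_elim (simp add: w_def P_def)
  ultimately have "maximizing_seq A v w" by (rule maximizing_seq_if_eventually_ge[OF llull t])
  then have "(\<lambda>n. w n a) \<longlonglongrightarrow> \<phi> a" using ab(1) by (rule maximizing_seq_tendsto)
  moreover have "(\<lambda>n. w n a) \<longlonglongrightarrow> \<phi> a + \<delta>"
  proof (rule Lim_transform_eventually)
    show "(\<lambda>n. t n a + \<delta>) \<longlonglongrightarrow> \<phi> a + \<delta>"
      by (intro tendsto_add maximizing_seq_tendsto[OF t ab(1)] tendsto_const)
    show "\<forall>\<^sub>F n in sequentially. t n a + \<delta> = w n a"
      using improves by eventually_elim (use ab(3) in \<open>simp add: w_def P_def\<close>)
  qed
  ultimately have "\<phi> a = \<phi> a + \<delta>" by (rule LIMSEQ_unique)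
  with \<delta> show False by simp
qed

lemma strength_consecutive_eq_imp_zero:
  assumes a: "a \<in> A" and b: "b \<in> A" and succ: "r b = r a + 1"
    and K: "exchange_coeff A v a b > 0" and eq: "\<phi> a = \<phi> b"
  shows "\<phi> a = 0"
proof (rule ccontr)
  assume "\<phi> a \<noteq> 0"
  then have c: "\<phi> a > 0" using strength_nonneg[OF a] by simp
  have ab: "a \<noteq> b" using succ by auto
  define n where "n = real (card A) - 1"
  have n: "n \<ge> 1" using real_card_Diff_two[OF finite_A a b ab] unfolding n_def by linarith
  text \<open>Once \<open>t\<^sub>b > \<phi>\<^sub>a / 2\<close>, this \<open>\<delta>\<close> meets the bounds of \<open>consecutive_shift_ge\<close>.\<close>
  define \<delta> where "\<delta> = min (\<phi> a / 4) (exchange_coeff A v a b * \<phi> a / (16 * n))"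
  have \<delta>: "\<delta> > 0" "\<delta> \<le> \<phi> a / 4" "\<delta> \<le> exchange_coeff A v a b * \<phi> a / (16 * n)"
    unfolding \<delta>_def using c K n by auto
  obtain t where t: "maximizing_seq A v t" "\<And>n. t n b \<le> t n a"
    using ex_sorted_maximizing_seq[OF a b succ] by blast
  have ta: "(\<lambda>n. t n a) \<longlonglongrightarrow> \<phi> a" using maximizing_seq_tendsto[OF t(1) a] .
  have tb: "(\<lambda>n. t n b) \<longlonglongrightarrow> \<phi> a" using maximizing_seq_tendsto[OF t(1) b] eq by simp
  have "\<forall>\<^sub>F k in sequentially. \<phi> a / 2 < t k b" using order_tendstoD(1)[OF tb, of "\<phi> a / 2"] c by simp
  moreover have "\<forall>\<^sub>F k in sequentially. t k a - t k b < \<delta>"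
    using order_tendstoD(2)[OF tendsto_diff[OF ta tb]] \<delta>(1) by simp
  ultimately have "\<forall>\<^sub>F k in sequentially. (t k)(a := t k a + \<delta>, b := t k b - \<delta>) \<in> Phi A \<and>
      zermelo_F A v (t k) \<le> zermelo_F A v ((t k)(a := t k a + \<delta>, b := t k b - \<delta>))"
  proof eventually_elim
    case (elim k)
    have "exchange_coeff A v a b * \<phi> a / (16 * n) \<le> exchange_coeff A v a b * t k b / (8 * n)"
      using elim K n by (simp add: field_simps)
    then show ?case
      using elim \<delta> t(2)[of k] n unfolding n_def
      by (intro conjI Phi_update_two[OF finite_A maximizing_seq_Phi[OF t(1)] a b ab]
          consecutive_shift_ge[OF a b succ maximizing_seq_Phi[OF t(1)] K]) auto
  qed
  from maximizing_seq_no_eventual_shift[OF t(1) a b ab _ this] \<delta>(1) show False by simp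
qed

definition consistently_above :: "'a \<Rightarrow> 'a \<Rightarrow> bool" where
  "consistently_above x y \<longleftrightarrow> mean_score A v y \<le> mean_score A v x \<and> \<phi> y \<le> \<phi> x \<and>
     (mean_score A v x = mean_score A v y \<longrightarrow> \<phi> x = \<phi> y) \<and>
     (mean_score A v y < mean_score A v x \<longrightarrow> \<phi> y < \<phi> x \<or> \<phi> y = 0)"

lemma consistently_above_trans:
  assumes "consistently_above x w" "consistently_above w y" "y \<in> A"
  shows "consistently_above x y"
  using assms strength_nonneg[of y] unfolding consistently_above_def by force

lemma consistently_above_consecutive:
  assumes a: "a \<in> A" and b: "b \<in> A" and succ: "r b = r a + 1"
  shows "consistently_above a b"
proof -
  have "\<phi> a = \<phi> b" if "mean_score A v a = mean_score A v b"
    using consecutive_mean_score_eq_imp[OF a b succ that] by (intro strength_consecutive_eq[OF a b succ])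
  moreover have "\<phi> b < \<phi> a \<or> \<phi> b = 0" if "mean_score A v b < mean_score A v a"
    using strength_consecutive_eq_imp_zero[OF a b succ consecutive_exchange_coeff_pos[OF a b succ that]]
      strength_consecutive_le[OF a b succ] by force
  ultimately show ?thesis
    using consecutive_mean_score_le[OF a b succ] strength_consecutive_le[OF a b succ]
    unfolding consistently_above_def by auto
qed

lemma consistently_above_if_rank_le:
  assumes x: "x \<in> A" and y: "y \<in> A" and le: "r x \<le> r y"
  shows "consistently_above x y"
proof -
  obtain k where "r y = r x + k" using le le_iff_add by blast
  with y show ?thesis
  proof (induction k arbitrary: y)
    case 0
    then have "y = x" using rank_inj x by simp
    then show ?case by (simp add: consistently_above_def)
  next
    case (Suc k)
    obtain w where w: "w \<in> A" "r w = r x + k" using ex_of_rank[OF Suc.prems(1)] Suc.prems(2) by auto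
    show ?case
      using consistently_above_trans[OF Suc.IH[OF w] consistently_above_consecutive[OF w(1) Suc.prems(1)]]
        w Suc.prems by simp
  qed
qed

end

theorem theorem3p5:
  fixes A :: "'a set" and v :: "'a \<Rightarrow> 'a \<Rightarrow> real" and \<phi> :: "'a \<Rightarrow> real"
  assumes "finite A" and "card A \<ge> 2"
    and "llull_matrix A v" and "has_CLC A v"
    and "\<exists>x\<in>A. \<exists>y\<in>A. x \<noteq> y \<and> v x y \<noteq> 0"
    and "strengths A v \<phi>"
    and "x \<in> A" and "y \<in> A"
  shows "(\<phi> x > \<phi> y \<longrightarrow> mean_score A v x > mean_score A v y) \<and>
         (mean_score A v x > mean_score A v y \<longrightarrow>
            \<phi> x > \<phi> y \<or> (\<phi> x = 0 \<and> \<phi> y = 0))"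
proof -
  text \<open>Non-vanishing of \<open>v\<close> only serves to make the strengths exist; here they are given.\<close>
  obtain r where "clc_order A v r" using assms(4) unfolding has_CLC_def by blast
  then interpret clc_strengths A v r \<phi> using assms(3,6) by unfold_locales
  have "consistently_above x y \<or> consistently_above y x"
    using consistently_above_if_rank_le assms(7,8) nat_le_linear by blast
  then show ?thesis
    using strength_nonneg[OF assms(7)] strength_nonneg[OF assms(8)]
    unfolding consistently_above_def by auto
qed

end
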